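(* For every nonnegative integer $n$ with $v(n)=0$, the directed graph $A(n)$ is a directed path graph.
   Context: A hyperbinary expansion of a nonnegative integer $n$ is a word $x_0\cdots x_k$ over $\{0,1,2\}$ with $x_0\ne0$ and $\sum_i x_i2^{k-i}=n$. The empty word is the unique hyperbinary expansion of $0$. Write $\mathcal H(n)$ for the set of such expansions and $b(n)=|\mathcal H(n)|$. $A(n)$ is the directed graph on $\mathcal H(n)$ with an arc from $\mathbf x02\mathbf y$ to $\mathbf x10\mathbf y$, from $2\mathbf y$ to $10\mathbf y$, and from $\mathbf x12\mathbf y$ to $\mathbf x20\mathbf y$, for arbitrary words $\mathbf x,\mathbf y$ whenever both endpoints lie in $\mathcal H(n)$. $A(n)$ is connected. $v(n)$ denotes the cyclomatic number of $A(n)$: (number of arcs) $-\,b(n)+1$. A directed path graph is a graph whose vertices can be listed $u_0,\dots,u_k$ so that its arcs are exactly $(u_{i-1},u_i)$ for $1\le i\le k$. *)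

theory Defs
  imports Main
begin

text \<open>Words over {0,1,2} are lists of naturals, most significant digit first.\<close>

definition hb_val :: "nat list \<Rightarrow> nat" where
  "hb_val xs = foldl (\<lambda>a d. 2 * a + d) 0 xs"

definition H :: "nat \<Rightarrow> nat list set" where
  "H n = {xs. set xs \<subseteq> {0,1,2} \<and> (xs \<noteq> [] \<longrightarrow> hd xs \<noteq> 0) \<and> hb_val xs = n}"

definition b :: "nat \<Rightarrow> nat" where
  "b n = card (H n)"

definition arcs :: "nat \<Rightarrow> (nat list \<times> nat list) set" where
  "arcs n = {(u, w). u \<in> H n \<and> w \<in> H n \<and>
     ((\<exists>x y. u = x @ [0,2] @ y \<and> w = x @ [1,0] @ y)
      \<or> (\<exists>y. u = 2 # y \<and> w = [1,0] @ y)
      \<or> (\<exists>x y. u = x @ [1,2] @ y \<and> w = x @ [2,0] @ y))}"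

definition v :: "nat \<Rightarrow> int" where
  "v n = int (card (arcs n)) - int (b n) + 1"

definition is_directed_path_graph :: "'a set \<Rightarrow> ('a \<times> 'a) set \<Rightarrow> bool" where
  "is_directed_path_graph V E \<longleftrightarrow>
     (\<exists>us. us \<noteq> [] \<and> distinct us \<and> set us = V \<and>
        E = {(us ! (i - 1), us ! i) | i. 1 \<le> i \<and> i < length us})"

end

theory Submission
  imports Defs
begin

text \<open>
  Every arc of \<open>A(n)\<close> rewrites \<open>02\<close> to \<open>10\<close>, \<open>12\<close> to \<open>20\<close> or a leading \<open>2\<close> to \<open>10\<close>,
  which raises the value of the word read in base 3; hence \<open>A(n)\<close> is acyclic. A word
  without outgoing arc contains no digit 2, and a word without incoming arc contains no
  digit 0; as the digits of \<open>{0, 1}\<close> (resp. \<open>{1, 2}\<close>) differ mod 2, there is only one such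
  word, so \<open>A(n)\<close> has a unique sink and a unique source. When moreover \<open>v(n) = 0\<close>, i.e.
  there is one arc fewer than vertices, counting shows that every vertex has at most one
  outgoing and at most one incoming arc, and an acyclic digraph of this kind with a single
  source is a directed path.
\<close>

lemma is_directed_path_graph_zip:
  assumes "distinct us" "us \<noteq> []"
  shows "is_directed_path_graph (set us) (set (zip us (tl us)))"
proof -
  have "{(us ! (i - 1), us ! i) | i. 1 \<le> i \<and> i < length us} = set (zip us (tl us))"
  proof (intro set_eqI iffI)
    fix p assume "p \<in> {(us ! (i - 1), us ! i) | i. 1 \<le> i \<and> i < length us}"
    then obtain i where "p = (us ! (i - 1), us ! i)" "1 \<le> i" "i < length us" by blast
    then show "p \<in> set (zip us (tl us))"
      unfolding set_zip by (intro CollectI exI[of _ "i - 1"]) (auto simp: nth_tl)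
  next
    fix p assume "p \<in> set (zip us (tl us))"
    then obtain i where "p = (us ! i, us ! Suc i)" "Suc i < length us"
      unfolding set_zip by (auto simp: nth_tl)
    then show "p \<in> {(us ! (i - 1), us ! i) | i. 1 \<le> i \<and> i < length us}"
      by (intro CollectI exI[of _ "Suc i"]) auto
  qed
  then show ?thesis
    using assms unfolding is_directed_path_graph_def by blast
qed

lemma ex_path_listing_from_source:
  assumes "finite V" "s \<in> V" "t \<in> V" "wf E"
    and "fst ` E = V - {t}" "snd ` E = V - {s}"
    and "inj_on fst E" "inj_on snd E"
  shows "\<exists>us. distinct us \<and> set us = V \<and> hd us = s \<and> E = set (zip us (tl us))"
  using assms
proof (induction "card V" arbitrary: V E s)
  case 0
  then show ?case by auto
next
  case (Suc k)
  show ?case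
  proof (cases "V = {s}")
    case True
    then have "E = {}" using Suc.prems(3,5) by auto
    then show ?thesis using True by (intro exI[of _ "[s]"]) auto
  next
    case False
    \<comment> \<open>An \<open>E\<close>-minimal vertex of \<open>V - {s}\<close> still has an in-arc, which must leave \<open>s\<close>.\<close>
    then obtain s' where s': "s' \<in> V - {s}" "\<And>w. (w, s') \<in> E \<Longrightarrow> w \<notin> V - {s}"
      using wfE_min'[OF Suc.prems(4), of "V - {s}"] Suc.prems(2) by blast
    then have "s' \<in> snd ` E" using Suc.prems(6) by simp
    then obtain w where w: "(w, s') \<in> E" by force
    then have "w \<in> V" using Suc.prems(5) by force
    then have arc: "(s, s') \<in> E" using s'(2)[OF w] w by simp
    define V' where "V' = V - {s}"
    define E' where "E' = E - {(s, s')}"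
    have "s' \<in> V'" using s'(1) V'_def by simp
    have "s \<in> fst ` E" using arc by force
    then have "t \<in> V'" using Suc.prems(3,5) V'_def by auto
    have "fst ` E' = V' - {t}"
      using inj_on_image_set_diff[OF Suc.prems(7), of E "{(s, s')}"] arc Suc.prems(5)
      unfolding E'_def V'_def by auto
    moreover have "snd ` E' = V' - {s'}"
      using inj_on_image_set_diff[OF Suc.prems(8), of E "{(s, s')}"] arc Suc.prems(6)
      unfolding E'_def V'_def by auto
    moreover have "k = card V'" "finite V'" using Suc.hyps(2) Suc.prems(1,2) V'_def by auto
    moreover have "inj_on fst E'" "inj_on snd E'" "wf E'"
      using Suc.prems(4,7,8) E'_def by (auto intro: inj_on_subset wf_subset)
    ultimately obtain us' where us': "distinct us'" "set us' = V'" "hd us' = s'"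
        "E' = set (zip us' (tl us'))"
      using Suc.hyps(1) \<open>s' \<in> V'\<close> \<open>t \<in> V'\<close> by blast
    then obtain r where "us' = s' # r" using \<open>s' \<in> V'\<close> by (cases us') auto
    moreover have "E = insert (s, s') E'" using arc E'_def by auto
    ultimately show ?thesis
      using us' Suc.prems(2) V'_def by (intro exI[of _ "s # us'"]) auto
  qed
qed

lemma is_directed_path_graph_if_acyclic:
  assumes "finite V" "E \<subseteq> V \<times> V" "acyclic E" "card E + 1 = card V"
    and "\<And>u u'. u \<in> V - fst ` E \<Longrightarrow> u' \<in> V - fst ` E \<Longrightarrow> u = u'"
    and "\<And>u u'. u \<in> V - snd ` E \<Longrightarrow> u' \<in> V - snd ` E \<Longrightarrow> u = u'"
  shows "is_directed_path_graph V E"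
proof -
  have "finite E" using assms(1,2) finite_subset by blast
  then have "wf E" "wf (E\<inverse>)"
    using assms(3) by (simp_all add: finite_acyclic_wf finite_acyclic_wf_converse)
  have "V \<noteq> {}" using assms(4) by auto
  then obtain v where "v \<in> V" by blast
  obtain t where "t \<in> V" "\<And>w. (w, t) \<in> E\<inverse> \<Longrightarrow> w \<notin> V"
    using wfE_min[OF \<open>wf (E\<inverse>)\<close> \<open>v \<in> V\<close>] by blast
  then have "t \<notin> fst ` E" using assms(2) by force
  have sink: "fst ` E = V - {t}"
  proof
    show "fst ` E \<subseteq> V - {t}" using assms(2) \<open>t \<notin> fst ` E\<close> by auto
    show "V - {t} \<subseteq> fst ` E" using assms(5)[of _ t] \<open>t \<in> V\<close> \<open>t \<notin> fst ` E\<close> by blast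
  qed
  obtain s where "s \<in> V" "\<And>w. (w, s) \<in> E \<Longrightarrow> w \<notin> V"
    using wfE_min[OF \<open>wf E\<close> \<open>v \<in> V\<close>] by blast
  then have "s \<notin> snd ` E" using assms(2) by force
  have source: "snd ` E = V - {s}"
  proof
    show "snd ` E \<subseteq> V - {s}" using assms(2) \<open>s \<notin> snd ` E\<close> by auto
    show "V - {s} \<subseteq> snd ` E" using assms(6)[of _ s] \<open>s \<in> V\<close> \<open>s \<notin> snd ` E\<close> by blast
  qed
  have "card (fst ` E) = card E" "card (snd ` E) = card E"
    using sink source \<open>t \<in> V\<close> \<open>s \<in> V\<close> assms(1,4) by simp_all
  then have "inj_on fst E" "inj_on snd E"
    using \<open>finite E\<close> by (simp_all add: eq_card_imp_inj_on)
  then obtain us where "distinct us" "set us = V" "E = set (zip us (tl us))"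
    using ex_path_listing_from_source[OF assms(1) \<open>s \<in> V\<close> \<open>t \<in> V\<close> \<open>wf E\<close> sink source] by blast
  then show ?thesis using \<open>v \<in> V\<close> is_directed_path_graph_zip by fastforce
qed

definition word_val :: "nat \<Rightarrow> nat list \<Rightarrow> nat" where
  "word_val B xs = foldl (\<lambda>a d. B * a + d) 0 xs"

lemma foldl_eq_word_val: "foldl (\<lambda>a d. B * a + d) a xs = a * B ^ length xs + word_val B xs"
proof (induction xs arbitrary: a)
  case Nil
  then show ?case by (simp add: word_val_def)
next
  case (Cons d xs)
  have "foldl (\<lambda>a d. B * a + d) a (d # xs) = (B * a + d) * B ^ length xs + word_val B xs"
    using Cons.IH[of "B * a + d"] by simp
  moreover have "word_val B (d # xs) = d * B ^ length xs + word_val B xs"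
    using Cons.IH[of d] unfolding word_val_def[of B "d # xs"] by simp
  ultimately show ?case by (simp add: algebra_simps)
qed

lemma word_val_Nil [simp]: "word_val B [] = 0"
  by (simp add: word_val_def)

lemma word_val_append: "word_val B (xs @ ys) = word_val B xs * B ^ length ys + word_val B ys"
proof -
  have "word_val B (xs @ ys) = foldl (\<lambda>a d. B * a + d) (word_val B xs) ys"
    by (simp add: word_val_def)
  then show ?thesis by (simp add: foldl_eq_word_val)
qed

lemma word_val_Cons: "word_val B (d # xs) = d * B ^ length xs + word_val B xs"
proof -
  have "word_val B [d] = d" by (simp add: word_val_def)
  then show ?thesis using word_val_append[of B "[d]" xs] by simp
qed

lemma word_val_snoc: "word_val B (xs @ [d]) = B * word_val B xs + d"
  by (simp add: word_val_append word_val_Cons)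

lemma word_val_pair:
  "word_val B (x @ a # c # y) = word_val B x * B ^ (length y + 2) + (B * a + c) * B ^ length y + word_val B y"
  by (simp add: word_val_append word_val_Cons algebra_simps)

lemma hb_val_eq_word_val: "hb_val = word_val 2"
  by (simp add: fun_eq_iff hb_val_def word_val_def)

lemma length_le_hb_val:
  assumes "xs \<noteq> [] \<longrightarrow> hd xs \<noteq> 0"
  shows "length xs \<le> hb_val xs"
proof (cases xs)
  case (Cons d ys)
  then have "length xs \<le> 2 ^ length ys" using less_exp[of "length ys"] by (simp add: Suc_leI)
  also have "\<dots> \<le> d * 2 ^ length ys" using assms Cons by simp
  finally show ?thesis using Cons by (simp add: hb_val_eq_word_val word_val_Cons)
qed simp

lemma finite_H: "finite (H n)"
proof (rule finite_subset)
  show "H n \<subseteq> {xs. set xs \<subseteq> {0, 1, 2} \<and> length xs \<le> n}"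
    unfolding H_def using length_le_hb_val by auto
  show "finite {xs. set xs \<subseteq> {0::nat, 1, 2} \<and> length xs \<le> n}"
    by (simp add: finite_lists_length_le)
qed

lemma mem_arcs_iff:
  "(u, w) \<in> arcs n \<longleftrightarrow> u \<in> H n \<and> w \<in> H n \<and>
     ((\<exists>x y. u = x @ [0, 2] @ y \<and> w = x @ [1, 0] @ y)
      \<or> (\<exists>y. u = 2 # y \<and> w = [1, 0] @ y)
      \<or> (\<exists>x y. u = x @ [1, 2] @ y \<and> w = x @ [2, 0] @ y))"
  unfolding arcs_def by simp

lemma arcs_subset_H: "arcs n \<subseteq> H n \<times> H n"
  unfolding arcs_def by auto

lemma word_val_3_less_on_arcs:
  assumes "(u, w) \<in> arcs n"
  shows "word_val 3 u < word_val 3 w"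
proof -
  from assms consider
      (carry_0) x y where "u = x @ [0, 2] @ y" "w = x @ [1, 0] @ y"
    | (lead) y where "u = 2 # y" "w = [1, 0] @ y"
    | (carry_1) x y where "u = x @ [1, 2] @ y" "w = x @ [2, 0] @ y"
    unfolding arcs_def by blast
  then show ?thesis
    by cases (simp_all add: word_val_pair word_val_Cons)
qed

lemma acyclic_arcs: "acyclic (arcs n)"
proof (rule acyclic_subset)
  show "acyclic (inv_image less_than (word_val 3))"
    by (simp add: wf_acyclic)
  show "arcs n \<subseteq> inv_image less_than (word_val 3)"
    using word_val_3_less_on_arcs by auto
qed

lemma H_replace_pair:
  assumes "x @ [a, c] @ y \<in> H n" "2 * a' + c' = 2 * a + c" "a' \<le> 2" "c' \<le> 2"
    and "x = [] \<longrightarrow> a' \<noteq> 0"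
  shows "x @ [a', c'] @ y \<in> H n"
proof -
  have "hb_val (x @ [a', c'] @ y) = hb_val (x @ [a, c] @ y)"
    using assms(2) by (simp add: hb_val_eq_word_val word_val_pair)
  moreover have "set [a', c'] \<subseteq> {0, 1, 2}" using assms(3,4) by auto
  ultimately show ?thesis
    using assms(1,5) unfolding H_def by (cases x) auto
qed

lemma lead_arc:
  assumes "2 # y \<in> H n \<or> [1, 0] @ y \<in> H n"
  shows "(2 # y, [1, 0] @ y) \<in> arcs n"
proof -
  have "2 # y \<in> H n \<longleftrightarrow> [1, 0] @ y \<in> H n"
    unfolding H_def by (auto simp: hb_val_eq_word_val word_val_Cons)
  then show ?thesis using assms unfolding arcs_def by auto
qed

lemma carry_arc:
  assumes "x @ [d, 2] @ y \<in> H n \<or> x @ [Suc d, 0] @ y \<in> H n" "d \<le> 1" "x = [] \<longrightarrow> d \<noteq> 0"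
  shows "(x @ [d, 2] @ y, x @ [Suc d, 0] @ y) \<in> arcs n"
proof -
  have digits_2: "x @ [d, 2] @ y \<in> H n"
  proof (cases "x @ [Suc d, 0] @ y \<in> H n")
    case True
    then show ?thesis using H_replace_pair[OF True, of d 2] assms(2,3) by simp
  qed (use assms(1) in blast)
  then have "x @ [Suc d, 0] @ y \<in> H n"
    using H_replace_pair[OF digits_2, of "Suc d" 0] assms(2) by simp
  note ends = digits_2 this
  have "d = 0 \<or> d = 1" using assms(2) by auto
  then show ?thesis
  proof
    assume "d = 0"
    have "\<exists>x' y'. x @ [d, 2] @ y = x' @ [0, 2] @ y' \<and> x @ [Suc d, 0] @ y = x' @ [1, 0] @ y'"
      by (rule exI[of _ x], rule exI[of _ y]) (simp add: \<open>d = 0\<close>)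
    then show ?thesis unfolding mem_arcs_iff by (intro conjI disjI1 ends)
  next
    assume "d = 1"
    have "\<exists>x' y'. x @ [d, 2] @ y = x' @ [1, 2] @ y' \<and> x @ [Suc d, 0] @ y = x' @ [2, 0] @ y'"
      by (rule exI[of _ x], rule exI[of _ y]) (simp add: \<open>d = 1\<close>)
    then show ?thesis unfolding mem_arcs_iff by (intro conjI disjI2 ends)
  qed
qed

lemma ex_out_arc_if_2_in_set:
  assumes "u \<in> H n" "2 \<in> set u"
  shows "\<exists>w. (u, w) \<in> arcs n"
proof -
  obtain a y where u: "u = a @ 2 # y" "2 \<notin> set a"
    using assms(2) by (metis split_list_first)
  show ?thesis
  proof (cases a rule: rev_exhaust)
    case Nil
    then show ?thesis using lead_arc assms(1) u by auto
  next
    case (snoc x d)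
    then have "d \<le> 1" "x = [] \<longrightarrow> d \<noteq> 0" using assms(1) u unfolding H_def by auto
    then show ?thesis using carry_arc[of x d y n] assms(1) u snoc by auto
  qed
qed

lemma ex_in_arc_if_0_in_set:
  assumes "w \<in> H n" "0 \<in> set w"
  shows "\<exists>u. (u, w) \<in> arcs n"
proof -
  obtain a y where w: "w = a @ 0 # y" "0 \<notin> set a"
    using assms(2) by (metis split_list_first)
  then obtain x d where "a = x @ [Suc d]" "d \<le> 1"
    using assms(1) unfolding H_def by (cases a rule: rev_exhaust) (auto simp: gr0_conv_Suc)
  then show ?thesis
    using lead_arc[of y n] carry_arc[of x d y n] assms(1) w by (cases "x = [] \<and> d = 0") auto
qed

lemma H_eq_if_digits_inj_mod_2:
  assumes "inj_on (\<lambda>d. d mod 2) D" "u \<in> H n" "u' \<in> H n" "set u \<subseteq> D" "set u' \<subseteq> D"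
  shows "u = u'"
  using assms(2-)
proof (induction u arbitrary: u' n rule: rev_induct)
  case Nil
  then have "n = 0" unfolding H_def by (simp add: hb_val_eq_word_val)
  then have "length u' \<le> 0" using Nil.prems(2) length_le_hb_val[of u'] unfolding H_def by simp
  then show ?case by simp
next
  case (snoc d a)
  then have "0 < n" using length_le_hb_val[of "a @ [d]"] unfolding H_def by auto
  then have "u' \<noteq> []" using snoc.prems(2) unfolding H_def by (auto simp: hb_val_def)
  then obtain a' d' where u': "u' = a' @ [d']" by (cases u' rule: rev_exhaust) auto
  have val: "2 * hb_val a + d = 2 * hb_val a' + d'"
    using snoc.prems(1,2) u' unfolding H_def by (simp add: hb_val_eq_word_val word_val_snoc)
  then have "d mod 2 = d' mod 2" by presburger
  then have "d = d'" using assms(1) snoc.prems(3,4) u' by (auto dest: inj_onD)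
  moreover have "hb_val a' = hb_val a" using val calculation by simp
  moreover have "a \<in> H (hb_val a)" "a' \<in> H (hb_val a')"
    using snoc.prems(1,2) u' unfolding H_def by (auto simp: hd_append split: if_splits)
  ultimately show ?case using snoc.IH[of "hb_val a" a'] snoc.prems(3,4) u' by simp
qed

theorem mainTheorem6:
  fixes n :: nat
  assumes "v n = 0"
  shows "is_directed_path_graph (H n) (arcs n)"
proof (rule is_directed_path_graph_if_acyclic[OF finite_H arcs_subset_H acyclic_arcs])
  show "card (arcs n) + 1 = card (H n)"
    using assms by (simp add: v_def b_def)
  have digits: "set u \<subseteq> {0, 1, 2}" if "u \<in> H n" for u
    using that unfolding H_def by simp
  show "u = u'" if "u \<in> H n - fst ` arcs n" "u' \<in> H n - fst ` arcs n" for u u'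
  proof (rule H_eq_if_digits_inj_mod_2[of "{0, 1}"])
    show "set u \<subseteq> {0, 1}" "set u' \<subseteq> {0, 1}"
      using that ex_out_arc_if_2_in_set digits by force+
  qed (use that in auto)
  show "u = u'" if "u \<in> H n - snd ` arcs n" "u' \<in> H n - snd ` arcs n" for u u'
  proof (rule H_eq_if_digits_inj_mod_2[of "{1, 2}"])
    show "set u \<subseteq> {1, 2}" "set u' \<subseteq> {1, 2}"
      using that ex_in_arc_if_0_in_set digits by force+
  qed (use that in auto)
qed

end
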